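(* Let $r\ge 3$, $\varepsilon>0$, and let $G$ be an $n$-vertex $K_r$-free graph such that for every pair of non-adjacent vertices $u,v\in V(G)$, the induced subgraph $G[N(u)\cap N(v)]$ contains at least $\varepsilon n^{r-2}$ copies of $K_{r-2}$. Then $G=F[\cdot]$ for some maximal $K_r$-free graph $F$ on at most $2^{O((\frac{1}{\varepsilon}+r)\log\frac{1}{\varepsilon})}$ vertices, where the implied constant in the $O(\cdot)$ is absolute.
   Context: $G=F[\cdot]$ means that $G$ is a blow-up of $F$: $G$ is obtained from $F$ by replacing each vertex $x$ of $F$ by an independent set $V_x$ (of some positive size, sizes may differ) and each edge $xy$ of $F$ by a complete bipartite graph between $V_x$ and $V_y$, with no other edges. A graph $F$ is maximal $K_r$-free if it is $K_r$-free and adding any new edge creates a copy of $K_r$. Logarithms are natural. *)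

theory Defs
  imports Complex_Main
begin

definition graph :: "'a set \<Rightarrow> ('a \<Rightarrow> 'a \<Rightarrow> bool) \<Rightarrow> bool" where
  "graph V E \<longleftrightarrow> finite V \<and> (\<forall>u v. E u v \<longrightarrow> u \<in> V \<and> v \<in> V)
     \<and> (\<forall>u v. E u v \<longrightarrow> E v u) \<and> (\<forall>u. \<not> E u u)"

definition clique :: "'a set \<Rightarrow> ('a \<Rightarrow> 'a \<Rightarrow> bool) \<Rightarrow> 'a set \<Rightarrow> bool" where
  "clique V E S \<longleftrightarrow> S \<subseteq> V \<and> (\<forall>x\<in>S. \<forall>y\<in>S. x \<noteq> y \<longrightarrow> E x y)"

definition Kr_free :: "'a set \<Rightarrow> ('a \<Rightarrow> 'a \<Rightarrow> bool) \<Rightarrow> nat \<Rightarrow> bool" where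
  "Kr_free V E r \<longleftrightarrow> \<not> (\<exists>S. clique V E S \<and> finite S \<and> card S = r)"

definition add_edge :: "('a \<Rightarrow> 'a \<Rightarrow> bool) \<Rightarrow> 'a \<Rightarrow> 'a \<Rightarrow> ('a \<Rightarrow> 'a \<Rightarrow> bool)" where
  "add_edge E x y = (\<lambda>a b. E a b \<or> (a = x \<and> b = y) \<or> (a = y \<and> b = x))"

definition maximal_Kr_free :: "'a set \<Rightarrow> ('a \<Rightarrow> 'a \<Rightarrow> bool) \<Rightarrow> nat \<Rightarrow> bool" where
  "maximal_Kr_free V E r \<longleftrightarrow> graph V E \<and> Kr_free V E r \<and>
     (\<forall>x\<in>V. \<forall>y\<in>V. x \<noteq> y \<and> \<not> E x y \<longrightarrow> \<not> Kr_free V (add_edge E x y) r)"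

definition nbhd :: "('a \<Rightarrow> 'a \<Rightarrow> bool) \<Rightarrow> 'a \<Rightarrow> 'a set" where
  "nbhd E u = {v. E u v}"

definition num_cliques :: "'a set \<Rightarrow> ('a \<Rightarrow> 'a \<Rightarrow> bool) \<Rightarrow> 'a set \<Rightarrow> nat \<Rightarrow> nat" where
  "num_cliques V E S k = card {T. T \<subseteq> S \<and> clique V E T \<and> finite T \<and> card T = k}"

text \<open>G = (V,E) is a blow-up F[.] of F = (W,EF): there is a surjection
  phi from V onto W (classes V_x = phi^{-1}(x), nonempty) such that u,v are
  adjacent in G iff phi u, phi v are adjacent in F.\<close>
definition blowup_of :: "'a set \<Rightarrow> ('a \<Rightarrow> 'a \<Rightarrow> bool) \<Rightarrow> 'b set \<Rightarrow> ('b \<Rightarrow> 'b \<Rightarrow> bool) \<Rightarrow> bool" where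
  "blowup_of V E W EF \<longleftrightarrow> (\<exists>\<phi>. \<phi> ` V = W \<and> (\<forall>u\<in>V. \<forall>v\<in>V. E u v \<longleftrightarrow> EF (\<phi> u) (\<phi> v)))"

end

theory Submission
  imports Defs "HOL-Library.FuncSet" "HOL-Library.Disjoint_Sets" "HOL-Library.Discrete_Functions"
begin

text \<open>
  Vertices with equal neighbourhoods (twins) are non-adjacent and adjacent to the same vertices,
  so collapsing each twin class to one representative exhibits \<open>G\<close> as a blow-up of the
  subgraph \<open>F\<close> induced on the representatives; a \<open>K\<^sub>r\<^sub>-\<^sub>2\<close> in the common neighbourhood
  of a non-adjacent pair maps to one in \<open>F\<close>, so \<open>F\<close> is maximal \<open>K\<^sub>r\<close>-free.

  It remains to count distinct neighbourhoods. Fewer than \<open>r\<close> vertices are universal.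
  Distinct neighbourhoods of the other vertices have symmetric difference at least \<open>\<epsilon>n\<close>,
  because every \<open>K\<^sub>r\<^sub>-\<^sub>2\<close> in the common neighbourhood of a suitable non-adjacent pair must
  meet it. A set \<open>T\<close> shattered by the neighbourhoods yields a ladder of vertices \<open>b\<^sub>t\<close> whose
  neighbourhoods on \<open>T\<close> are the initial segments; the non-edges \<open>b\<^sub>t t\<close> have pairwise disjoint
  families of common \<open>K\<^sub>r\<^sub>-\<^sub>2\<close>'s, so \<open>|T| \<le> 1/\<epsilon> + 1\<close>. Finally, among \<open>2\<^sup>p\<close> members of an
  \<open>\<epsilon>n\<close>-separated family some sample of \<open>O(p/\<epsilon>)\<close> vertices separates all pairs (union bound),
  while by the Sauer--Shelah lemma the family has only polynomially many traces on the sample;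
  this forces \<open>p = O(1/\<epsilon> \<cdot> log (1/\<epsilon>))\<close>.
\<close>

lemma graph_sym: "graph V E \<Longrightarrow> E u v \<Longrightarrow> E v u"
  unfolding graph_def by blast

lemma graph_irrefl: "graph V E \<Longrightarrow> \<not> E u u"
  unfolding graph_def by blast

lemma graph_adj_memD:
  assumes "graph V E" "E u v"
  shows "u \<in> V" "v \<in> V"
  using assms unfolding graph_def by blast+

lemma graph_finite: "graph V E \<Longrightarrow> finite V"
  unfolding graph_def by blast

lemma mem_nbhd_iff [simp]: "v \<in> nbhd E u \<longleftrightarrow> E u v"
  unfolding nbhd_def by simp

lemma nbhd_subset: "graph V E \<Longrightarrow> nbhd E u \<subseteq> V"
  using graph_adj_memD(2) by fastforce

definition cliques_within :: "'a set \<Rightarrow> ('a \<Rightarrow> 'a \<Rightarrow> bool) \<Rightarrow> 'a set \<Rightarrow> nat \<Rightarrow> 'a set set" where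
  "cliques_within V E S k = {T. T \<subseteq> S \<and> clique V E T \<and> finite T \<and> card T = k}"

lemma num_cliques_eq_card: "num_cliques V E S k = card (cliques_within V E S k)"
  unfolding num_cliques_def cliques_within_def ..

lemma cliques_within_subset: "cliques_within V E S k \<subseteq> {Q. Q \<subseteq> V \<and> card Q = k}"
  unfolding cliques_within_def clique_def by blast

lemma Kr_free_no_common_clique:
  assumes g: "graph V E" and free: "Kr_free V E r" and r: "r \<ge> 2" and ab: "E a b"
  shows "cliques_within V E (nbhd E a \<inter> nbhd E b) (r - 2) = {}"
proof (rule ccontr)
  assume "cliques_within V E (nbhd E a \<inter> nbhd E b) (r - 2) \<noteq> {}"
  then obtain Q where Q: "Q \<subseteq> nbhd E a \<inter> nbhd E b" "clique V E Q" "finite Q" "card Q = r - 2"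
    unfolding cliques_within_def by blast
  have "a \<notin> Q" "b \<notin> Q" "a \<noteq> b" using Q(1) ab graph_irrefl[OF g] by auto
  then have "card (insert a (insert b Q)) = r" using Q(3,4) r by simp
  moreover have "clique V E (insert a (insert b Q))"
    using Q(1,2) ab graph_adj_memD[OF g ab] graph_sym[OF g] unfolding clique_def by auto
  ultimately show False using free Q(3) unfolding Kr_free_def by blast
qed

lemma card_universal_less:
  assumes "Kr_free V E r"
  shows "card {u\<in>V. \<forall>z\<in>V. z \<noteq> u \<longrightarrow> E u z} < r"
proof (rule ccontr)
  assume "\<not> card {u\<in>V. \<forall>z\<in>V. z \<noteq> u \<longrightarrow> E u z} < r"
  then have "r \<le> card {u\<in>V. \<forall>z\<in>V. z \<noteq> u \<longrightarrow> E u z}" by simp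
  then obtain S where S: "S \<subseteq> {u\<in>V. \<forall>z\<in>V. z \<noteq> u \<longrightarrow> E u z}" "card S = r" "finite S"
    by (rule obtain_subset_with_card_n)
  then have "clique V E S" unfolding clique_def by (auto simp: subset_iff)
  then show False using assms S(2,3) unfolding Kr_free_def by auto
qed

lemma graph_add_edge: "graph V E \<Longrightarrow> x \<in> V \<Longrightarrow> y \<in> V \<Longrightarrow> x \<noteq> y \<Longrightarrow> graph V (add_edge E x y)"
  unfolding graph_def add_edge_def by auto

lemma maximal_Kr_freeI:
  assumes g: "graph V E" and free: "Kr_free V E r" and r: "r \<ge> 2"
    and common: "\<And>x y. x \<in> V \<Longrightarrow> y \<in> V \<Longrightarrow> x \<noteq> y \<Longrightarrow> \<not> E x y
      \<Longrightarrow> cliques_within V E (nbhd E x \<inter> nbhd E y) (r - 2) \<noteq> {}"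
  shows "maximal_Kr_free V E r"
  unfolding maximal_Kr_free_def
proof (intro conjI g free ballI impI notI)
  fix x y assume xy: "x \<in> V" "y \<in> V" "x \<noteq> y \<and> \<not> E x y" and free': "Kr_free V (add_edge E x y) r"
  obtain Q where "Q \<in> cliques_within V E (nbhd E x \<inter> nbhd E y) (r - 2)" using common xy by blast
  then have "Q \<in> cliques_within V (add_edge E x y) (nbhd (add_edge E x y) x \<inter> nbhd (add_edge E x y) y) (r - 2)"
    unfolding cliques_within_def clique_def nbhd_def add_edge_def by blast
  moreover have "add_edge E x y x y" unfolding add_edge_def by simp
  ultimately show False
    using Kr_free_no_common_clique[OF graph_add_edge[OF g xy(1,2)] free' r] xy by blast
qed

definition induced :: "('a \<Rightarrow> 'a \<Rightarrow> bool) \<Rightarrow> 'a set \<Rightarrow> 'a \<Rightarrow> 'a \<Rightarrow> bool" where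
  "induced E W a b \<longleftrightarrow> E a b \<and> a \<in> W \<and> b \<in> W"

lemma graph_induced:
  assumes "graph V E" "W \<subseteq> V"
  shows "graph W (induced E W)"
  using assms(1) finite_subset[OF assms(2)] unfolding graph_def induced_def by blast

lemma Kr_free_induced:
  assumes "Kr_free V E r" "W \<subseteq> V"
  shows "Kr_free W (induced E W) r"
proof -
  have "clique V E S" if "clique W (induced E W) S" for S
    using that assms(2) unfolding clique_def induced_def by blast
  then show ?thesis using assms(1) unfolding Kr_free_def by blast
qed

section \<open>Collapsing twin vertices\<close>

lemma adj_iff_of_nbhd_eq:
  assumes g: "graph V E" and "nbhd E u = nbhd E u'" "nbhd E v = nbhd E v'"
  shows "E u v \<longleftrightarrow> E u' v'"
proof -
  have "E u v \<longleftrightarrow> E u' v" using assms(2) by (metis mem_nbhd_iff)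
  also have "\<dots> \<longleftrightarrow> E v u'" using graph_sym[OF g] by blast
  also have "\<dots> \<longleftrightarrow> E v' u'" using assms(3) by (metis mem_nbhd_iff)
  also have "\<dots> \<longleftrightarrow> E u' v'" using graph_sym[OF g] by blast
  finally show ?thesis .
qed

definition twin_rep :: "'a set \<Rightarrow> ('a \<Rightarrow> 'a \<Rightarrow> bool) \<Rightarrow> 'a \<Rightarrow> 'a" where
  "twin_rep V E u = inv_into V (nbhd E) (nbhd E u)"

definition twin_reps :: "'a set \<Rightarrow> ('a \<Rightarrow> 'a \<Rightarrow> bool) \<Rightarrow> 'a set" where
  "twin_reps V E = twin_rep V E ` V"

lemma twin_rep_mem: "u \<in> V \<Longrightarrow> twin_rep V E u \<in> V"
  unfolding twin_rep_def by (simp add: inv_into_into)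

lemma nbhd_twin_rep: "u \<in> V \<Longrightarrow> nbhd E (twin_rep V E u) = nbhd E u"
  unfolding twin_rep_def by (simp add: f_inv_into_f)

lemma twin_rep_fixed:
  assumes "x \<in> twin_reps V E"
  shows "twin_rep V E x = x"
proof -
  obtain u where u: "u \<in> V" "x = twin_rep V E u" using assms unfolding twin_reps_def by blast
  have "twin_rep V E x = inv_into V (nbhd E) (nbhd E x)" by (rule twin_rep_def)
  also have "nbhd E x = nbhd E u" unfolding u(2) by (rule nbhd_twin_rep[OF u(1)])
  also have "inv_into V (nbhd E) (nbhd E u) = x" unfolding u(2) twin_rep_def ..
  finally show ?thesis .
qed

lemma twin_reps_subset: "twin_reps V E \<subseteq> V"
  unfolding twin_reps_def by (rule image_subsetI) (rule twin_rep_mem)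

lemma adj_twin_rep_iff:
  assumes "graph V E" "u \<in> V" "v \<in> V"
  shows "E (twin_rep V E u) (twin_rep V E v) \<longleftrightarrow> E u v"
  using adj_iff_of_nbhd_eq[OF assms(1) nbhd_twin_rep[OF assms(2)] nbhd_twin_rep[OF assms(3)]] .

lemma card_twin_reps_le:
  assumes "finite V"
  shows "card (twin_reps V E) \<le> card (nbhd E ` V)"
proof -
  have "twin_reps V E = inv_into V (nbhd E) ` nbhd E ` V"
    unfolding twin_reps_def twin_rep_def by (simp only: image_image)
  then show ?thesis using assms by (simp add: card_image_le)
qed

lemma blowup_of_twin_reps: "graph V E \<Longrightarrow> blowup_of V E (twin_reps V E) (induced E (twin_reps V E))"
  unfolding blowup_of_def induced_def
  by (rule exI[of _ "twin_rep V E"]) (auto simp: twin_reps_def adj_twin_rep_iff)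

lemma twin_rep_image_mem_cliques_within:
  assumes g: "graph V E" and x: "x \<in> twin_reps V E" and y: "y \<in> twin_reps V E"
    and Q: "Q \<in> cliques_within V E (nbhd E x \<inter> nbhd E y) k"
  defines "W \<equiv> twin_reps V E"
  shows "twin_rep V E ` Q \<in> cliques_within W (induced E W) (nbhd (induced E W) x \<inter> nbhd (induced E W) y) k"
proof -
  let ?rep = "twin_rep V E"
  have xV: "x \<in> V" using subsetD[OF twin_reps_subset x] .
  have yV: "y \<in> V" using subsetD[OF twin_reps_subset y] .
  have QV: "Q \<subseteq> V" using subsetD[OF cliques_within_subset Q] by simp
  have adj_Q: "E a b" if "a \<in> Q" "b \<in> Q" "a \<noteq> b" for a b
    using Q that unfolding cliques_within_def clique_def by blast
  have rep_W: "?rep q \<in> W" if "q \<in> Q" for q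
    unfolding W_def twin_reps_def by (rule imageI) (rule subsetD[OF QV that])
  \<comment> \<open>representatives preserve adjacency, so distinct clique vertices have distinct representatives\<close>
  have "inj_on ?rep Q"
  proof (rule inj_onI, rule ccontr)
    fix a b assume ab: "a \<in> Q" "b \<in> Q" "?rep a = ?rep b" "a \<noteq> b"
    then have "E (?rep a) (?rep b)" using adj_twin_rep_iff[OF g] adj_Q QV by blast
    then show False using ab(3) graph_irrefl[OF g] by metis
  qed
  then have "card (?rep ` Q) = k" using Q unfolding cliques_within_def by (simp add: card_image)
  moreover have "?rep ` Q \<subseteq> nbhd (induced E W) x \<inter> nbhd (induced E W) y"
  proof (rule image_subsetI)
    fix q assume "q \<in> Q"
    then have "E x q" "E y q" "q \<in> V" using Q QV unfolding cliques_within_def by auto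
    then have "E x (?rep q)" "E y (?rep q)"
      using adj_twin_rep_iff[OF g xV] adj_twin_rep_iff[OF g yV] twin_rep_fixed[OF x] twin_rep_fixed[OF y]
      by metis+
    then show "?rep q \<in> nbhd (induced E W) x \<inter> nbhd (induced E W) y"
      using x y rep_W[OF \<open>q \<in> Q\<close>] unfolding induced_def W_def by simp
  qed
  moreover have "clique W (induced E W) (?rep ` Q)"
    unfolding clique_def
  proof (intro conjI ballI impI)
    show "?rep ` Q \<subseteq> W" using rep_W by (rule image_subsetI)
    fix a b assume "a \<in> ?rep ` Q" "b \<in> ?rep ` Q" "a \<noteq> b"
    then obtain qa qb where q: "qa \<in> Q" "qb \<in> Q" "a = ?rep qa" "b = ?rep qb" "qa \<noteq> qb" by blast
    then have "E a b" using adj_twin_rep_iff[OF g] adj_Q QV by blast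
    then show "induced E W a b" using rep_W q unfolding induced_def by simp
  qed
  ultimately show ?thesis using Q unfolding cliques_within_def by simp
qed

lemma maximal_Kr_free_twin_reps:
  assumes g: "graph V E" and free: "Kr_free V E r" and r: "r \<ge> 2"
    and common: "\<And>x y. x \<in> V \<Longrightarrow> y \<in> V \<Longrightarrow> x \<noteq> y \<Longrightarrow> \<not> E x y
      \<Longrightarrow> cliques_within V E (nbhd E x \<inter> nbhd E y) (r - 2) \<noteq> {}"
  shows "maximal_Kr_free (twin_reps V E) (induced E (twin_reps V E)) r"
proof (rule maximal_Kr_freeI[OF graph_induced[OF g twin_reps_subset] Kr_free_induced[OF free twin_reps_subset] r])
  fix x y assume x: "x \<in> twin_reps V E" and y: "y \<in> twin_reps V E" and "x \<noteq> y"
    and "\<not> induced E (twin_reps V E) x y"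
  then have "\<not> E x y" unfolding induced_def by simp
  then obtain Q where "Q \<in> cliques_within V E (nbhd E x \<inter> nbhd E y) (r - 2)"
    using common[OF subsetD[OF twin_reps_subset x] subsetD[OF twin_reps_subset y] \<open>x \<noteq> y\<close>] by blast
  from twin_rep_image_mem_cliques_within[OF g x y this]
  show "cliques_within (twin_reps V E) (induced E (twin_reps V E))
      (nbhd (induced E (twin_reps V E)) x \<inter> nbhd (induced E (twin_reps V E)) y) (r - 2) \<noteq> {}"
    by blast
qed

section \<open>Counting subsets\<close>

lemma card_k_subsets_le_pow: "finite V \<Longrightarrow> card {Q. Q \<subseteq> V \<and> card Q = k} \<le> card V ^ k"
  by (cases "k \<le> card V") (auto simp: n_subsets binomial_le_pow binomial_eq_0)

lemma card_subsets_meeting_le: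
  assumes fin: "finite V" and D: "D \<subseteq> V"
  shows "card {Q. Q \<subseteq> V \<and> Q \<inter> D \<noteq> {} \<and> card Q = Suc k} \<le> card D * card V ^ k"
proof -
  have card_through: "card {Q. Q \<subseteq> V \<and> d \<in> Q \<and> card Q = Suc k} \<le> card V ^ k" for d
  proof -
    have "inj_on (\<lambda>Q. Q - {d}) {Q. Q \<subseteq> V \<and> d \<in> Q \<and> card Q = Suc k}"
      by (intro inj_onI) blast
    moreover have "(\<lambda>Q. Q - {d}) ` {Q. Q \<subseteq> V \<and> d \<in> Q \<and> card Q = Suc k} \<subseteq> {Q. Q \<subseteq> V \<and> card Q = k}"
      using fin by (auto dest: finite_subset)
    ultimately have "card {Q. Q \<subseteq> V \<and> d \<in> Q \<and> card Q = Suc k} \<le> card {Q. Q \<subseteq> V \<and> card Q = k}"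
      using fin by (intro card_inj_on_le) auto
    also have "\<dots> \<le> card V ^ k" using card_k_subsets_le_pow[OF fin] .
    finally show ?thesis .
  qed
  have "{Q. Q \<subseteq> V \<and> Q \<inter> D \<noteq> {} \<and> card Q = Suc k} = (\<Union>d\<in>D. {Q. Q \<subseteq> V \<and> d \<in> Q \<and> card Q = Suc k})"
    by blast
  also have "card \<dots> \<le> (\<Sum>d\<in>D. card {Q. Q \<subseteq> V \<and> d \<in> Q \<and> card Q = Suc k})"
    using D fin by (intro card_UN_le) (auto dest: finite_subset)
  also have "\<dots> \<le> (\<Sum>d\<in>D. card V ^ k)"
    by (rule sum_mono) (rule card_through)
  also have "\<dots> = card D * card V ^ k" by simp
  finally show ?thesis .
qed

lemma card_subsets_up_to_le_pow:
  assumes "finite S"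
  shows "card {T. T \<subseteq> S \<and> card T \<le> K} \<le> (card S + 1) ^ K"
proof (induction K)
  case 0
  have "{T. T \<subseteq> S \<and> card T \<le> 0} = {{}}" using assms by (auto dest: finite_subset)
  then show ?case by simp
next
  case (Suc K)
  define C where "C = {T. T \<subseteq> S \<and> card T \<le> K}"
  have finC: "finite C" using assms C_def by auto
  have "{T. T \<subseteq> S \<and> card T \<le> Suc K} \<subseteq> C \<union> (\<Union>x\<in>S. insert x ` C)"
  proof
    fix T assume T: "T \<in> {T. T \<subseteq> S \<and> card T \<le> Suc K}"
    show "T \<in> C \<union> (\<Union>x\<in>S. insert x ` C)"
    proof (cases "T = {}")
      case False
      then obtain x where "x \<in> T" by blast
      then have "T - {x} \<in> C" "T = insert x (T - {x})"
        using T assms finite_subset unfolding C_def by fastforce+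
      then show ?thesis using \<open>x \<in> T\<close> T by blast
    qed (auto simp: C_def)
  qed
  then have "card {T. T \<subseteq> S \<and> card T \<le> Suc K} \<le> card (C \<union> (\<Union>x\<in>S. insert x ` C))"
    using assms finC by (intro card_mono) auto
  also have "\<dots> \<le> card C + card (\<Union>x\<in>S. insert x ` C)" by (rule card_Un_le)
  also have "\<dots> \<le> card C + (\<Sum>x\<in>S. card (insert x ` C))"
    using card_UN_le[OF assms] by (rule add_left_mono)
  also have "\<dots> \<le> card C + (\<Sum>x\<in>S. card C)"
    using card_image_le[OF finC] by (intro add_left_mono sum_mono)
  also have "\<dots> = (card S + 1) * card C" by simp
  also have "\<dots> \<le> (card S + 1) * (card S + 1) ^ K" using Suc unfolding C_def by (intro mult_le_mono2)
  finally show ?case by simp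
qed

lemma card_index_le_of_disjoint_dense_families:
  fixes c :: real
  assumes fin: "finite V" "V \<noteq> {}" "finite I" and disj: "disjoint_family_on \<Q> I"
    and sub: "\<And>t. t \<in> I \<Longrightarrow> \<Q> t \<subseteq> {Q. Q \<subseteq> V \<and> card Q = k}"
    and dense: "\<And>t. t \<in> I \<Longrightarrow> c * real (card V) ^ k \<le> real (card (\<Q> t))"
  shows "real (card I) * c \<le> 1"
proof -
  have fin_fam: "finite (\<Q> t)" if "t \<in> I" for t
    using sub[OF that] fin(1) by (auto intro: finite_subset[of _ "Pow V"])
  have "real (card I) * c * real (card V) ^ k = (\<Sum>t\<in>I. c * real (card V) ^ k)" by simp
  also have "\<dots> \<le> (\<Sum>t\<in>I. real (card (\<Q> t)))" by (rule sum_mono) (rule dense)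
  also have "\<dots> = real (card (\<Union>t\<in>I. \<Q> t))"
    using card_UN_disjoint'[OF disj fin_fam fin(3)] by simp
  also have "\<dots> \<le> real (card {Q. Q \<subseteq> V \<and> card Q = k})"
    using UN_least[of I \<Q>, OF sub] fin(1) by (intro of_nat_mono card_mono) simp_all
  also have "\<dots> \<le> real (card V) ^ k"
    using card_k_subsets_le_pow[OF fin(1)] by (metis of_nat_le_iff of_nat_power)
  finally show ?thesis using fin(1,2) by (simp add: card_gt_0_iff)
qed

section \<open>Shattering and packing\<close>

definition shatters :: "'a set set \<Rightarrow> 'a set \<Rightarrow> bool" where
  "shatters F T \<longleftrightarrow> (\<forall>T'\<subseteq>T. \<exists>A\<in>F. A \<inter> T = T')"

lemma shatters_mono: "F \<subseteq> G \<Longrightarrow> shatters F T \<Longrightarrow> shatters G T"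
  unfolding shatters_def by (meson subsetD)

lemma shatters_if_traces:
  assumes "shatters G T" "\<And>A. A \<in> G \<Longrightarrow> \<exists>B\<in>F. B \<inter> T = A \<inter> T"
  shows "shatters F T"
  unfolding shatters_def
proof (intro allI impI)
  fix T' assume "T' \<subseteq> T"
  then obtain A where "A \<in> G" "A \<inter> T = T'" using assms(1) unfolding shatters_def by blast
  then show "\<exists>B\<in>F. B \<inter> T = T'" using assms(2) by metis
qed

lemma shatters_split_union:
  assumes "x \<notin> T" "shatters ({A\<in>F. x \<notin> A} \<union> (\<lambda>A. A - {x}) ` {A\<in>F. x \<in> A}) T"
  shows "shatters F T"
proof (rule shatters_if_traces[OF assms(2)])
  fix A assume "A \<in> {A\<in>F. x \<notin> A} \<union> (\<lambda>A. A - {x}) ` {A\<in>F. x \<in> A}"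
  then obtain B where "B \<in> F" "A = B \<or> A = B - {x}" by blast
  then show "\<exists>B\<in>F. B \<inter> T = A \<inter> T" using assms(1) by blast
qed

lemma shatters_split_inter:
  assumes "x \<notin> T" "shatters ({A\<in>F. x \<notin> A} \<inter> (\<lambda>A. A - {x}) ` {A\<in>F. x \<in> A}) T"
  shows "shatters F (insert x T)"
  unfolding shatters_def
proof (intro allI impI)
  fix U assume U: "U \<subseteq> insert x T"
  then have "U - {x} \<subseteq> T" by blast
  then obtain A where A: "A \<in> {A\<in>F. x \<notin> A} \<inter> (\<lambda>A. A - {x}) ` {A\<in>F. x \<in> A}" "A \<inter> T = U - {x}"
    using assms(2)[unfolded shatters_def, rule_format, of "U - {x}"] by blast
  show "\<exists>A\<in>F. A \<inter> insert x T = U"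
  proof (cases "x \<in> U")
    case True
    from A(1) obtain B where "B \<in> F" "x \<in> B" "A = B - {x}" by blast
    then have "B \<inter> insert x T = U" using A(2) True U assms(1) by blast
    then show ?thesis using \<open>B \<in> F\<close> by blast
  next
    case False
    have "A \<in> F" "x \<notin> A" using A(1) by auto
    then have "A \<inter> insert x T = U" using A(2) False by blast
    then show ?thesis using \<open>A \<in> F\<close> by blast
  qed
qed

text \<open>Pajor's form of the Sauer--Shelah lemma.\<close>

lemma card_le_card_shattered:
  assumes "finite S" "F \<subseteq> Pow S"
  shows "card F \<le> card {T. T \<subseteq> S \<and> shatters F T}"
  using assms
proof (induction S arbitrary: F rule: finite_induct)
  case empty
  show ?case
  proof (cases "F = {}")
    case False
    then have "shatters F {}" unfolding shatters_def by blast
    then have "{T. T \<subseteq> {} \<and> shatters F T} = {{}}" by auto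
    moreover have "card F \<le> 1" using empty.prems card_mono[of "{{}}" F] by auto
    ultimately show ?thesis by simp
  qed simp
next
  case (insert x S)
  define F0 where "F0 = {A\<in>F. x \<notin> A}"
  define F1 where "F1 = (\<lambda>A. A - {x}) ` {A\<in>F. x \<in> A}"
  define SH where "SH G = {T. T \<subseteq> S \<and> shatters G T}" for G
  have F01: "F0 \<subseteq> Pow S" "F1 \<subseteq> Pow S" using insert.prems unfolding F0_def F1_def by auto
  have fin: "finite F0" "finite F1" using F01 insert.hyps(1) by (metis finite_Pow_iff finite_subset)+
  have "card F = card (F0 \<union> {A\<in>F. x \<in> A})"
    unfolding F0_def by (rule arg_cong[where f = card]) blast
  also have "\<dots> = card F0 + card {A\<in>F. x \<in> A}"
    using finite_subset[OF insert.prems] insert.hyps(1) unfolding F0_def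
    by (intro card_Un_disjoint) auto
  also have "card {A\<in>F. x \<in> A} = card F1"
    unfolding F1_def by (intro card_image[symmetric] inj_onI) blast
  also have "card F0 + card F1 = card (F0 \<union> F1) + card (F0 \<inter> F1)"
    using card_Un_Int[OF fin] .
  also have "\<dots> \<le> card (SH (F0 \<union> F1)) + card (SH (F0 \<inter> F1))"
    using insert.IH[of "F0 \<union> F1"] insert.IH[of "F0 \<inter> F1"] F01 unfolding SH_def
    by (intro add_mono) auto
  also have "card (SH (F0 \<inter> F1)) = card (insert x ` SH (F0 \<inter> F1))"
    using insert.hyps(2) unfolding SH_def
    by (intro card_image[symmetric] inj_onI) (metis insert_ident mem_Collect_eq subsetD)
  also have "card (SH (F0 \<union> F1)) + \<dots> = card (SH (F0 \<union> F1) \<union> insert x ` SH (F0 \<inter> F1))"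
    using insert.hyps unfolding SH_def by (intro card_Un_disjoint[symmetric]) auto
  also have "\<dots> \<le> card {T. T \<subseteq> insert x S \<and> shatters F T}"
  proof (intro card_mono subsetI)
    fix T assume "T \<in> SH (F0 \<union> F1) \<union> insert x ` SH (F0 \<inter> F1)"
    then show "T \<in> {T. T \<subseteq> insert x S \<and> shatters F T}"
      using insert.hyps(2) shatters_split_union[of x _ F, folded F0_def F1_def]
        shatters_split_inter[of x _ F, folded F0_def F1_def]
      unfolding SH_def by blast
  qed (use insert.hyps(1) in simp)
  finally show ?case .
qed

lemma card_traces_le:
  assumes "finite S" and vc: "\<And>T. T \<subseteq> S \<Longrightarrow> shatters F T \<Longrightarrow> card T \<le> K"
  shows "card ((\<lambda>A. A \<inter> S) ` F) \<le> (card S + 1) ^ K"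
proof -
  have "card ((\<lambda>A. A \<inter> S) ` F) \<le> card {T. T \<subseteq> S \<and> shatters ((\<lambda>A. A \<inter> S) ` F) T}"
    using assms(1) by (rule card_le_card_shattered) auto
  also have "\<dots> \<le> card {T. T \<subseteq> S \<and> card T \<le> K}"
  proof (rule card_mono)
    show "finite {T. T \<subseteq> S \<and> card T \<le> K}" using assms(1) by simp
    show "{T. T \<subseteq> S \<and> shatters ((\<lambda>A. A \<inter> S) ` F) T} \<subseteq> {T. T \<subseteq> S \<and> card T \<le> K}"
      using vc shatters_if_traces[where F = F] by blast
  qed
  also have "\<dots> \<le> (card S + 1) ^ K" using card_subsets_up_to_le_pow[OF assms(1)] .
  finally show ?thesis .
qed

lemma card_samples_missing_le:
  fixes \<epsilon> :: real
  assumes fin: "finite V" and D: "D \<subseteq> V" and big: "\<epsilon> * card V \<le> card D"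
  shows "real (card (\<Pi>\<^sub>E i\<in>{..<s}. V - D)) \<le> (1 - \<epsilon>) ^ s * real (card V) ^ s"
proof -
  have "card (V - D) = card V - card D" "card D \<le> card V"
    using card_Diff_subset[OF finite_subset[OF D fin] D] card_mono[OF fin D] by simp_all
  then have "real (card (V - D)) \<le> (1 - \<epsilon>) * card V"
    using big by (simp add: of_nat_diff algebra_simps)
  then have "real (card (V - D)) ^ s \<le> ((1 - \<epsilon>) * card V) ^ s"
    by (rule power_mono) simp
  then show ?thesis by (simp add: card_PiE power_mult_distrib)
qed

lemma exists_sample_hitting:
  fixes \<D> :: "'a set set" and \<epsilon> :: real
  assumes fin: "finite V" "V \<noteq> {}" and "finite \<D>"
    and large: "\<And>D. D \<in> \<D> \<Longrightarrow> D \<subseteq> V \<and> \<epsilon> * card V \<le> card D"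
    and few: "real (card \<D>) * (1 - \<epsilon>) ^ s < 1"
  obtains f where "f \<in> (\<Pi>\<^sub>E i\<in>{..<s}. V)" "\<And>D. D \<in> \<D> \<Longrightarrow> \<exists>i<s. f i \<in> D"
proof -
  define n where "n = card V"
  have "n > 0" using fin unfolding n_def by (simp add: card_gt_0_iff)
  define Miss where "Miss D = (\<Pi>\<^sub>E i\<in>{..<s}. V - D)" for D
  have "real (card (\<Union>D\<in>\<D>. Miss D)) \<le> (\<Sum>D\<in>\<D>. real (card (Miss D)))"
    using card_UN_le[OF \<open>finite \<D>\<close>, of Miss] by (simp flip: of_nat_sum)
  also have "\<dots> \<le> (\<Sum>D\<in>\<D>. (1 - \<epsilon>) ^ s * real n ^ s)"
    using card_samples_missing_le[OF fin(1)] large unfolding Miss_def n_def by (intro sum_mono) blast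
  also have "\<dots> = real (card \<D>) * (1 - \<epsilon>) ^ s * real n ^ s" by simp
  also have "\<dots> < real n ^ s" using few \<open>n > 0\<close> by simp
  also have "\<dots> = real (card (\<Pi>\<^sub>E i\<in>{..<s}. V))" by (simp add: card_PiE n_def)
  finally have "card (\<Union>D\<in>\<D>. Miss D) < card (\<Pi>\<^sub>E i\<in>{..<s}. V)" by (simp only: of_nat_less_iff)
  moreover have "finite (\<Union>D\<in>\<D>. Miss D)"
    using fin(1) \<open>finite \<D>\<close> unfolding Miss_def by (intro finite_UN_I finite_PiE) auto
  ultimately have "\<not> (\<Pi>\<^sub>E i\<in>{..<s}. V) \<subseteq> (\<Union>D\<in>\<D>. Miss D)"
    using card_mono leD by blast
  then obtain f where f: "f \<in> (\<Pi>\<^sub>E i\<in>{..<s}. V)" "f \<notin> (\<Union>D\<in>\<D>. Miss D)" by blast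
  have "\<exists>i<s. f i \<in> D" if "D \<in> \<D>" for D
    using f that unfolding Miss_def by (auto simp: PiE_iff)
  with f(1) show thesis by (rule that)
qed

lemma exists_separating_sample:
  fixes N :: "'a set set" and \<epsilon> :: real
  assumes fin: "finite V" "V \<noteq> {}" and N: "N \<subseteq> Pow V" "finite N" and "\<epsilon> \<le> 1"
    and sep: "\<And>A B. A \<in> N \<Longrightarrow> B \<in> N \<Longrightarrow> A \<noteq> B \<Longrightarrow> \<epsilon> * card V \<le> card (sym_diff A B)"
    and few: "real (card N) ^ 2 * (1 - \<epsilon>) ^ s < 1"
  obtains S where "S \<subseteq> V" "card S \<le> s" "inj_on (\<lambda>A. A \<inter> S) N"
proof -
  define P where "P = {(A, B) \<in> N \<times> N. A \<noteq> B}"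
  define \<D> where "\<D> = (\<lambda>(A, B). sym_diff A B) ` P"
  have "P \<subseteq> N \<times> N" unfolding P_def by auto
  moreover have "finite (N \<times> N)" using N(2) by simp
  ultimately have "finite P" "card P \<le> card N * card N"
    by (simp_all add: finite_subset card_mono flip: card_cartesian_product)
  then have "finite \<D>" "card \<D> \<le> card N * card N"
    unfolding \<D>_def using card_image_le[of P "\<lambda>(A, B). sym_diff A B"] by simp_all
  then have "real (card \<D>) * (1 - \<epsilon>) ^ s \<le> real (card N) ^ 2 * (1 - \<epsilon>) ^ s"
    using \<open>\<epsilon> \<le> 1\<close> by (intro mult_right_mono) (simp_all add: power2_eq_square flip: of_nat_mult)
  with few have "real (card \<D>) * (1 - \<epsilon>) ^ s < 1" by linarith
  moreover have "D \<subseteq> V \<and> \<epsilon> * card V \<le> card D" if D: "D \<in> \<D>" for D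
  proof -
    obtain A B where "A \<in> N" "B \<in> N" "A \<noteq> B" "D = sym_diff A B"
      using D unfolding \<D>_def P_def by blast
    then show ?thesis using N(1) sep by blast
  qed
  ultimately obtain f where f: "f \<in> (\<Pi>\<^sub>E i\<in>{..<s}. V)" "\<And>D. D \<in> \<D> \<Longrightarrow> \<exists>i<s. f i \<in> D"
    using exists_sample_hitting[OF fin \<open>finite \<D>\<close>] by blast
  show thesis
  proof
    show "f ` {..<s} \<subseteq> V" using f(1) by auto
    show "card (f ` {..<s}) \<le> s" using card_image_le[of "{..<s}" f] by simp
    show "inj_on (\<lambda>A. A \<inter> f ` {..<s}) N"
    proof (rule inj_onI, rule ccontr)
      fix A B assume AB: "A \<in> N" "B \<in> N" "A \<inter> f ` {..<s} = B \<inter> f ` {..<s}" "A \<noteq> B"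
      then have "sym_diff A B \<in> \<D>" unfolding \<D>_def P_def by blast
      then obtain i where "i < s" "f i \<in> sym_diff A B" using f(2) by blast
      then show False using AB(3) by blast
    qed
  qed
qed

lemma power_one_minus_le_half:
  fixes \<epsilon> :: real
  assumes "0 \<le> \<epsilon>" "\<epsilon> \<le> 1" "1 \<le> real k * \<epsilon>"
  shows "(1 - \<epsilon>) ^ k \<le> 1 / 2"
proof -
  have "(1 - \<epsilon>) ^ k \<le> exp (- \<epsilon>) ^ k"
    using assms(2) exp_ge_add_one_self[of "- \<epsilon>"] by (intro power_mono) auto
  also have "\<dots> = exp (- (real k * \<epsilon>))" by (simp flip: exp_of_nat_mult)
  also have "\<dots> \<le> exp (- 1)" using assms(3) by simp
  also have "\<dots> \<le> 1 / 2"
    using exp_ge_add_one_self[of 1] by (simp add: exp_minus inverse_eq_divide)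
  finally show ?thesis .
qed

lemma card_separated_family_less:
  fixes N :: "'a set set" and \<epsilon> :: real
  assumes fin: "finite V" and N: "N \<subseteq> Pow V" and \<epsilon>: "0 \<le> \<epsilon>" "\<epsilon> \<le> 1" "1 \<le> real k * \<epsilon>"
    and sep: "\<And>A B. A \<in> N \<Longrightarrow> B \<in> N \<Longrightarrow> A \<noteq> B \<Longrightarrow> \<epsilon> * card V \<le> card (sym_diff A B)"
    and vc: "\<And>T. T \<subseteq> V \<Longrightarrow> shatters N T \<Longrightarrow> card T \<le> K"
    and big: "(k * (2 * p + 1) + 1) ^ K < 2 ^ p"
  shows "card N < 2 ^ p"
proof (rule ccontr)
  assume "\<not> card N < 2 ^ p"
  then obtain N' where N': "N' \<subseteq> N" "card N' = 2 ^ p" "finite N'"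
    by (metis obtain_subset_with_card_n not_less)
  have "p \<noteq> 0" using big by (intro notI) simp
  have "V \<noteq> {}"
  proof
    assume "V = {}"
    then have "N' \<subseteq> {{}}" using N'(1) N by auto
    then have "card N' \<le> 1" using card_mono[of "{{}}" N'] by simp
    moreover have "(2::nat) \<le> 2 ^ p" using \<open>p \<noteq> 0\<close> by (simp add: self_le_power)
    ultimately show False using N'(2) by simp
  qed
  define s where "s = k * (2 * p + 1)"
  have "(1 - \<epsilon>) ^ s = ((1 - \<epsilon>) ^ k) ^ (2 * p + 1)" unfolding s_def by (rule power_mult)
  also have "\<dots> \<le> (1 / 2) ^ (2 * p + 1)"
    using power_one_minus_le_half[OF \<epsilon>] \<epsilon>(2) by (intro power_mono) auto
  finally have "real (card N') ^ 2 * (1 - \<epsilon>) ^ s \<le> (2 ^ p) ^ 2 * (1 / 2) ^ (2 * p + 1)"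
    using N'(2) by (simp add: mult_left_mono)
  also have "\<dots> = 1 / 2" by (simp add: power_add power_divide flip: power_mult)
  finally have few: "real (card N') ^ 2 * (1 - \<epsilon>) ^ s < 1" by simp
  have "N' \<subseteq> Pow V" using N'(1) N by blast
  moreover have "\<epsilon> * card V \<le> card (sym_diff A B)" if "A \<in> N'" "B \<in> N'" "A \<noteq> B" for A B
    using sep that N'(1) by blast
  ultimately obtain S where S: "S \<subseteq> V" "card S \<le> s" "inj_on (\<lambda>A. A \<inter> S) N'"
    using exists_separating_sample[OF fin \<open>V \<noteq> {}\<close> _ N'(3) \<epsilon>(2) _ few] by blast
  have vc': "card T \<le> K" if "T \<subseteq> S" "shatters N' T" for T
    using vc[of T] S(1) shatters_mono[OF N'(1) that(2)] that(1) by blast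
  have "2 ^ p = card ((\<lambda>A. A \<inter> S) ` N')" using card_image[OF S(3)] N'(2) by simp
  also have "\<dots> \<le> (card S + 1) ^ K"
    using card_traces_le[OF finite_subset[OF S(1) fin] vc'] .
  also have "\<dots> \<le> (s + 1) ^ K" using S(2) by (simp add: power_mono)
  finally show False using big unfolding s_def by simp
qed

lemma ln_2_ge_half: "1 / 2 \<le> ln (2::real)"
  by (subst ln_ge_iff) (simp_all add: exp_half_le2)

lemma packing_exponent:
  assumes "k > 0"
  defines "p \<equiv> 8 * (k + 1) * (floor_log k + 2)"
  shows "(k * (2 * p + 1) + 1) ^ (k + 1) < 2 ^ p"
proof -
  define j where "j = floor_log k + 1"
  define y :: nat where "y = 2 ^ j"
  have "k < y" using floor_log_exp2_gt[of k] unfolding y_def j_def by simp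
  have "j + 1 \<le> y" using less_exp[of j] unfolding y_def by (simp add: Suc_le_eq)
  have "1 \<le> y" unfolding y_def by simp
  have "p \<le> 8 * y * y"
    unfolding p_def using \<open>k < y\<close> \<open>j + 1 \<le> y\<close> unfolding j_def by (intro mult_mono) auto
  have "k * (2 * p + 1) + 1 \<le> (k + 1) * (2 * p + 1)" by simp
  also have "\<dots> \<le> y * (16 * y * y + 1)"
    using \<open>k < y\<close> \<open>p \<le> 8 * y * y\<close> by (intro mult_mono) auto
  also have "\<dots> \<le> y * (17 * (y * y))" using \<open>1 \<le> y\<close> by (intro mult_le_mono2) (simp add: one_le_mult_iff)
  also have "\<dots> = 17 * y ^ 3" by (simp add: power3_eq_cube)
  also have "\<dots> < 256 * y ^ 3" using \<open>1 \<le> y\<close> by simp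
  also have "\<dots> \<le> 256 * y ^ 8" using \<open>1 \<le> y\<close> by (intro mult_le_mono2 power_increasing) auto
  also have "\<dots> = 2 ^ (8 * (j + 1))" unfolding y_def by (simp add: power_add algebra_simps flip: power_mult)
  finally have "(k * (2 * p + 1) + 1) ^ (k + 1) < (2 ^ (8 * (j + 1))) ^ (k + 1)"
    by (intro power_strict_mono) auto
  also have "\<dots> = 2 ^ (8 * (j + 1) * (k + 1))" by (simp only: power_mult)
  also have "8 * (j + 1) * (k + 1) = p" unfolding p_def j_def by (simp add: algebra_simps)
  finally show ?thesis .
qed

lemma packing_exponent_le:
  fixes x :: real
  assumes x: "2 \<le> x" and k: "x \<le> real k" "real k < x + 1"
  shows "real (8 * (k + 1) * (floor_log k + 2)) \<le> 128 * x * ln x"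
proof -
  have "k > 0" using x k by linarith
  have "real (2 ^ (floor_log k + 2)) \<le> 4 * real k"
    using floor_log_exp2_le[OF \<open>k > 0\<close>] by (simp add: power_add)
  also have "\<dots> \<le> x ^ 4"
  proof -
    have "8 \<le> x ^ 3" using power_mono[OF x, of 3] by simp
    then have "8 * x \<le> x ^ 3 * x" using x by (intro mult_right_mono) auto
    moreover have "x ^ 3 * x = x ^ 4" by (simp add: eval_nat_numeral)
    ultimately show ?thesis using k x by linarith
  qed
  finally have "ln (2 ^ (floor_log k + 2)) \<le> ln (x ^ 4)" using x by (simp add: ln_le_cancel_iff)
  then have ln_le: "real (floor_log k + 2) * ln 2 \<le> 4 * ln x" by (simp only: ln_realpow of_nat_numeral)
  have "real (floor_log k + 2) * (1 / 2) \<le> real (floor_log k + 2) * ln 2"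
    by (rule mult_left_mono[OF ln_2_ge_half]) simp
  also note ln_le
  finally have log_le: "real (floor_log k + 2) \<le> 8 * ln x" by simp
  have "real (8 * (k + 1) * (floor_log k + 2)) = 8 * real (k + 1) * real (floor_log k + 2)"
    by (simp only: of_nat_mult of_nat_numeral)
  also have "\<dots> \<le> 8 * (2 * x) * (8 * ln x)"
    using k x log_le by (intro mult_mono) auto
  finally show ?thesis by simp
qed

section \<open>Graphs with many cliques in common neighbourhoods\<close>

definition dense_common_cliques :: "'a set \<Rightarrow> ('a \<Rightarrow> 'a \<Rightarrow> bool) \<Rightarrow> nat \<Rightarrow> real \<Rightarrow> bool" where
  "dense_common_cliques V E r \<epsilon> \<longleftrightarrow> (\<forall>u\<in>V. \<forall>v\<in>V. u \<noteq> v \<and> \<not> E u v \<longrightarrow>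
     real (num_cliques V E (nbhd E u \<inter> nbhd E v) (r - 2)) \<ge> \<epsilon> * real (card V) ^ (r - 2))"

lemma dense_common_cliquesD:
  assumes "dense_common_cliques V E r \<epsilon>" "u \<in> V" "v \<in> V" "u \<noteq> v" "\<not> E u v"
  shows "\<epsilon> * real (card V) ^ (r - 2) \<le> real (card (cliques_within V E (nbhd E u \<inter> nbhd E v) (r - 2)))"
  using assms unfolding dense_common_cliques_def num_cliques_eq_card by blast

lemma common_cliques_nonempty:
  assumes g: "graph V E" and dense: "dense_common_cliques V E r \<epsilon>" and "\<epsilon> > 0"
    and uv: "u \<in> V" "v \<in> V" "u \<noteq> v" "\<not> E u v"
  shows "cliques_within V E (nbhd E u \<inter> nbhd E v) (r - 2) \<noteq> {}"
proof -
  have "card V > 0" using uv(1) graph_finite[OF g] card_gt_0_iff by blast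
  then have "0 < \<epsilon> * real (card V) ^ (r - 2)" using \<open>\<epsilon> > 0\<close> by simp
  then have "0 < real (card (cliques_within V E (nbhd E u \<inter> nbhd E v) (r - 2)))"
    using dense_common_cliquesD[OF dense uv] by linarith
  then show ?thesis by auto
qed

lemma card_nbhd_diff_ge:
  assumes g: "graph V E" and free: "Kr_free V E r" and r: "r \<ge> 3"
    and dense: "dense_common_cliques V E r \<epsilon>"
    and v: "v \<in> V" and w: "w \<in> nbhd E u - nbhd E v" "w \<noteq> v"
  shows "\<epsilon> * card V \<le> card (nbhd E v - nbhd E u)"
proof -
  define n where "n = card V"
  define D where "D = nbhd E v - nbhd E u"
  have fin: "finite V" using graph_finite[OF g] .
  have r2: "r - 2 = Suc (r - 3)" using r by arith
  have "n > 0" using v fin n_def card_gt_0_iff by blast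
  have uw: "E u w" and vw: "\<not> E v w" using w by auto
  have wV: "w \<in> V" using graph_adj_memD(2)[OF g uw] .
  have DV: "D \<subseteq> V" using nbhd_subset[OF g] D_def by blast
  have "cliques_within V E (nbhd E v \<inter> nbhd E w) (r - 2)
      \<subseteq> {Q. Q \<subseteq> V \<and> Q \<inter> D \<noteq> {} \<and> card Q = Suc (r - 3)}"
  proof
    fix Q assume Q: "Q \<in> cliques_within V E (nbhd E v \<inter> nbhd E w) (r - 2)"
    \<comment> \<open>a clique avoiding \<open>D\<close> would lie in the common neighbourhood of the adjacent pair \<open>u, w\<close>\<close>
    have "Q \<notin> cliques_within V E (nbhd E u \<inter> nbhd E w) (r - 2)"
      using Kr_free_no_common_clique[OF g free _ uw] r by auto
    then have "Q \<inter> D \<noteq> {}" using Q unfolding cliques_within_def D_def by blast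
    then show "Q \<in> {Q. Q \<subseteq> V \<and> Q \<inter> D \<noteq> {} \<and> card Q = Suc (r - 3)}"
      using subsetD[OF cliques_within_subset Q] r2 by simp
  qed
  then have "card (cliques_within V E (nbhd E v \<inter> nbhd E w) (r - 2))
      \<le> card {Q. Q \<subseteq> V \<and> Q \<inter> D \<noteq> {} \<and> card Q = Suc (r - 3)}"
    by (rule card_mono[rotated]) (use fin in auto)
  also have "\<dots> \<le> card D * n ^ (r - 3)"
    unfolding n_def by (rule card_subsets_meeting_le[OF fin DV])
  finally have "card (cliques_within V E (nbhd E v \<inter> nbhd E w) (r - 2)) \<le> card D * n ^ (r - 3)" .
  moreover have "\<epsilon> * real n ^ (r - 2) \<le> real (card (cliques_within V E (nbhd E v \<inter> nbhd E w) (r - 2)))"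
    using dense_common_cliquesD[OF dense v wV] w vw unfolding n_def by blast
  ultimately have "\<epsilon> * real n ^ (r - 2) \<le> real (card D) * real n ^ (r - 3)"
    by (metis (mono_tags, opaque_lifting) of_nat_le_iff of_nat_mult of_nat_power order_trans)
  moreover have "real n ^ (r - 2) = real n * real n ^ (r - 3)"
    unfolding r2 by simp
  ultimately have "(\<epsilon> * real n) * real n ^ (r - 3) \<le> real (card D) * real n ^ (r - 3)"
    by (simp add: algebra_simps)
  then show ?thesis using \<open>n > 0\<close> unfolding n_def D_def by simp
qed

lemma card_sym_diff_nbhd_ge:
  assumes g: "graph V E" and free: "Kr_free V E r" and r: "r \<ge> 3"
    and dense: "dense_common_cliques V E r \<epsilon>" and "\<epsilon> > 0"
    and u: "u \<in> V" and v: "v \<in> V" and non_universal: "\<exists>z\<in>V. z \<noteq> u \<and> \<not> E u z"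
    and ne: "nbhd E u \<noteq> nbhd E v"
  shows "\<epsilon> * card V \<le> card (sym_diff (nbhd E u) (nbhd E v))"
proof -
  have fin: "finite (sym_diff (nbhd E u) (nbhd E v))"
    using nbhd_subset[OF g] graph_finite[OF g] finite_subset by blast
  consider (left) w where "w \<in> nbhd E u - nbhd E v" "w \<noteq> v"
    | (right) w where "w \<in> nbhd E v - nbhd E u" "w \<noteq> u"
    | (only_uv) "nbhd E u - nbhd E v \<subseteq> {v}" "nbhd E v - nbhd E u \<subseteq> {u}"
    by blast
  then show ?thesis
  proof cases
    case left
    then have "\<epsilon> * card V \<le> card (nbhd E v - nbhd E u)"
      using card_nbhd_diff_ge[OF g free r dense v] by blast
    also have "\<dots> \<le> card (sym_diff (nbhd E u) (nbhd E v))" using card_mono[OF fin] by auto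
    finally show ?thesis .
  next
    case right
    then have "\<epsilon> * card V \<le> card (nbhd E u - nbhd E v)"
      using card_nbhd_diff_ge[OF g free r dense u] by blast
    also have "\<dots> \<le> card (sym_diff (nbhd E u) (nbhd E v))" using card_mono[OF fin] by auto
    finally show ?thesis .
  next
    case only_uv
    \<comment> \<open>the neighbourhoods differ only in \<open>u, v\<close> themselves, so \<open>u, v\<close> are adjacent, and a common
      clique of \<open>u\<close> and a non-neighbour \<open>z \<noteq> v\<close> of \<open>u\<close> lies in the neighbourhood of \<open>v\<close> too\<close>
    obtain x where "x \<in> sym_diff (nbhd E u) (nbhd E v)" using ne by blast
    then have uv: "E u v" using only_uv graph_sym[OF g] by auto
    obtain z where z: "z \<in> V" "z \<noteq> u" "\<not> E u z" using non_universal by blast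
    have "\<not> E v z" using only_uv z by auto
    obtain Q where Q: "Q \<in> cliques_within V E (nbhd E u \<inter> nbhd E z) (r - 2)"
      using common_cliques_nonempty[OF g dense \<open>\<epsilon> > 0\<close> u z(1) z(2)[symmetric] z(3)] by blast
    then have "v \<notin> Q" using \<open>\<not> E v z\<close> graph_sym[OF g] unfolding cliques_within_def by auto
    then have "Q \<in> cliques_within V E (nbhd E u \<inter> nbhd E v) (r - 2)"
      using Q only_uv unfolding cliques_within_def by blast
    then show ?thesis using Kr_free_no_common_clique[OF g free _ uv] r by auto
  qed
qed

lemma card_ladder_non_edges_le:
  fixes V :: "'a::linorder set"
  assumes g: "graph V E" and free: "Kr_free V E r" and r: "r \<ge> 3"
    and dense: "dense_common_cliques V E r \<epsilon>" and T: "T \<subseteq> V"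
    and b: "\<And>t. b t \<in> V" and ladder: "\<And>t t'. t' \<in> T \<Longrightarrow> E (b t) t' \<longleftrightarrow> t' < t"
  shows "real (card {t\<in>T. b t \<noteq> t}) * \<epsilon> \<le> 1"
proof -
  define I where "I = {t\<in>T. b t \<noteq> t}"
  define \<Q> where "\<Q> t = cliques_within V E (nbhd E (b t) \<inter> nbhd E t) (r - 2)" for t
  have fin: "finite V" using graph_finite[OF g] .
  have "finite T" using T fin by (rule finite_subset)
  then have "finite I" unfolding I_def by simp
  \<comment> \<open>for \<open>t1 < t2\<close> the pair \<open>b t2, t1\<close> is adjacent, so no clique is common to both non-edges\<close>
  have disjoint_lt: "\<Q> t1 \<inter> \<Q> t2 = {}" if "t1 \<in> I" "t1 < t2" for t1 t2
  proof -
    have "E (b t2) t1" using ladder that unfolding I_def by blast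
    from Kr_free_no_common_clique[OF g free _ this] r
    show ?thesis unfolding \<Q>_def cliques_within_def by auto
  qed
  have disjoint: "disjoint_family_on \<Q> I"
    unfolding disjoint_family_on_def
  proof (intro ballI impI)
    fix t1 t2 assume "t1 \<in> I" "t2 \<in> I" "t1 \<noteq> t2"
    then show "\<Q> t1 \<inter> \<Q> t2 = {}"
      using disjoint_lt[of t1 t2] disjoint_lt[of t2 t1] by (cases t1 t2 rule: linorder_cases) auto
  qed
  have dense_\<Q>: "\<epsilon> * real (card V) ^ (r - 2) \<le> real (card (\<Q> t))" if "t \<in> I" for t
  proof -
    have "t \<in> V" "b t \<noteq> t" "\<not> E (b t) t" using that T ladder[of t t] unfolding I_def by auto
    then show ?thesis using dense_common_cliquesD[OF dense b] unfolding \<Q>_def by blast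
  qed
  have "V \<noteq> {}" using b by blast
  from card_index_le_of_disjoint_dense_families[OF fin this \<open>finite I\<close> disjoint _ dense_\<Q>]
  show ?thesis unfolding I_def \<Q>_def by (simp add: cliques_within_subset)
qed

lemma card_shattered_by_nbhds_le:
  fixes V :: "'a::linorder set"
  assumes g: "graph V E" and free: "Kr_free V E r" and r: "r \<ge> 3"
    and dense: "dense_common_cliques V E r \<epsilon>" and "\<epsilon> \<ge> 0"
    and T: "T \<subseteq> V" and shattered: "shatters (nbhd E ` V) T"
  shows "real (card T) * \<epsilon> \<le> 1 + \<epsilon>"
proof -
  have finT: "finite T" using T graph_finite[OF g] finite_subset by blast
  have "\<exists>b\<in>V. nbhd E b \<inter> T = {t'\<in>T. t' < t}" for t
    using shattered[unfolded shatters_def, rule_format, of "{t'\<in>T. t' < t}"] by blast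
  then obtain b where b: "\<And>t. b t \<in> V" "\<And>t. nbhd E (b t) \<inter> T = {t'\<in>T. t' < t}"
    by metis
  have ladder: "E (b t) t' \<longleftrightarrow> t' < t" if "t' \<in> T" for t t'
  proof -
    have "t' \<in> nbhd E (b t) \<inter> T \<longleftrightarrow> t' \<in> {t'\<in>T. t' < t}" by (simp only: b(2))
    then show ?thesis using that by simp
  qed
  define I where "I = {t\<in>T. b t \<noteq> t}"
  have "I \<subseteq> T" unfolding I_def by blast
  have "card (T - I) \<le> 1"
  proof -
    have "x = y" if "x \<in> T - I" "y \<in> T - I" for x y
      using ladder[of x y] ladder[of y x] graph_sym[OF g, of x y] graph_sym[OF g, of y x] that
      unfolding I_def by (cases x y rule: linorder_cases) auto
    then show ?thesis using finT by (simp add: card_le_Suc0_iff_eq)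
  qed
  moreover have "card (T - I) = card T - card I" "card I \<le> card T"
    using \<open>I \<subseteq> T\<close> finT by (simp_all add: card_Diff_subset finite_subset card_mono)
  ultimately have "real (card T) * \<epsilon> \<le> (real (card I) + 1) * \<epsilon>"
    using \<open>\<epsilon> \<ge> 0\<close> by (intro mult_right_mono) auto
  moreover have "real (card I) * \<epsilon> \<le> 1"
    unfolding I_def by (rule card_ladder_non_edges_le[OF g free r dense T b(1) ladder])
  ultimately show ?thesis by (simp add: algebra_simps)
qed

lemma card_nbhds_non_universal_less:
  fixes V :: "'a::linorder set"
  assumes g: "graph V E" and free: "Kr_free V E r" and r: "r \<ge> 3"
    and dense: "dense_common_cliques V E r \<epsilon>" and \<epsilon>: "0 < \<epsilon>" "\<epsilon> \<le> 1" and k: "1 / \<epsilon> \<le> real k"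
    and big: "(k * (2 * p + 1) + 1) ^ (k + 1) < 2 ^ p"
  shows "card (nbhd E ` {u\<in>V. \<exists>z\<in>V. z \<noteq> u \<and> \<not> E u z}) < 2 ^ p"
proof (rule card_separated_family_less[OF graph_finite[OF g] _ _ \<epsilon>(2) _ _ _ big])
  show "nbhd E ` {u\<in>V. \<exists>z\<in>V. z \<noteq> u \<and> \<not> E u z} \<subseteq> Pow V" using nbhd_subset[OF g] by blast
  show "0 \<le> \<epsilon>" "1 \<le> real k * \<epsilon>" using \<epsilon> k by (simp_all add: field_simps)
next
  fix A B assume "A \<in> nbhd E ` {u\<in>V. \<exists>z\<in>V. z \<noteq> u \<and> \<not> E u z}" "B \<in> nbhd E ` {u\<in>V. \<exists>z\<in>V. z \<noteq> u \<and> \<not> E u z}"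
    and "A \<noteq> B"
  then obtain u v where u: "u \<in> V" "\<exists>z\<in>V. z \<noteq> u \<and> \<not> E u z" and v: "v \<in> V"
    and AB: "A = nbhd E u" "B = nbhd E v"
    by blast
  then show "\<epsilon> * real (card V) \<le> real (card (sym_diff A B))"
    using card_sym_diff_nbhd_ge[OF g free r dense \<epsilon>(1) u(1) v u(2)] \<open>A \<noteq> B\<close> by simp
next
  fix T assume T: "T \<subseteq> V" "shatters (nbhd E ` {u\<in>V. \<exists>z\<in>V. z \<noteq> u \<and> \<not> E u z}) T"
  have "nbhd E ` {u\<in>V. \<exists>z\<in>V. z \<noteq> u \<and> \<not> E u z} \<subseteq> nbhd E ` V" by auto
  from shatters_mono[OF this T(2)]
  have "real (card T) * \<epsilon> \<le> 1 + \<epsilon>"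
    using card_shattered_by_nbhds_le[OF g free r dense _ T(1)] \<epsilon>(1) by simp
  then have "real (card T) \<le> 1 / \<epsilon> + 1" using \<epsilon>(1) by (simp add: field_simps)
  then show "card T \<le> k + 1" using k by linarith
qed

lemma card_nbhds_less:
  fixes V :: "'a::linorder set"
  assumes g: "graph V E" and free: "Kr_free V E r" and r: "r \<ge> 3"
    and dense: "dense_common_cliques V E r \<epsilon>" and \<epsilon>: "0 < \<epsilon>" "\<epsilon> \<le> 1" and k: "1 / \<epsilon> \<le> real k"
    and big: "(k * (2 * p + 1) + 1) ^ (k + 1) < 2 ^ p"
  shows "card (nbhd E ` V) < r + 2 ^ p"
proof -
  define U where "U = {u\<in>V. \<forall>z\<in>V. z \<noteq> u \<longrightarrow> E u z}"
  define V' where "V' = {u\<in>V. \<exists>z\<in>V. z \<noteq> u \<and> \<not> E u z}"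
  have "V = U \<union> V'" unfolding U_def V'_def by auto
  then have "nbhd E ` V = nbhd E ` U \<union> nbhd E ` V'" by (simp only: image_Un)
  then have "card (nbhd E ` V) \<le> card (nbhd E ` U) + card (nbhd E ` V')"
    by (simp add: card_Un_le)
  also have "card (nbhd E ` U) \<le> card U"
    using graph_finite[OF g] unfolding U_def by (intro card_image_le) simp
  also have "card U < r" unfolding U_def by (rule card_universal_less[OF free])
  also have "card (nbhd E ` V') < 2 ^ p"
    unfolding V'_def by (rule card_nbhds_non_universal_less[OF g free r dense \<epsilon> k big])
  finally show ?thesis by simp
qed

lemma card_nbhds_le_powr:
  fixes V :: "'a::linorder set"
  assumes g: "graph V E" and free: "Kr_free V E r" and r: "r \<ge> 3"
    and dense: "dense_common_cliques V E r \<epsilon>" and \<epsilon>: "0 < \<epsilon>" "\<epsilon> \<le> 1 / 2"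
  shows "real (card (nbhd E ` V)) \<le> 2 powr (128 * (1 / \<epsilon> + real r) * ln (1 / \<epsilon>))"
proof -
  define x where "x = 1 / \<epsilon>"
  define k where "k = nat \<lceil>x\<rceil>"
  define p where "p = 8 * (k + 1) * (floor_log k + 2)"
  have x: "2 \<le> x" using \<epsilon> unfolding x_def by (simp add: field_simps)
  have k: "x \<le> real k" "real k < x + 1" using x unfolding k_def by linarith+
  have "card (nbhd E ` V) < r + 2 ^ p"
    using card_nbhds_less[OF g free r dense \<epsilon>(1) _ _ packing_exponent] \<epsilon> k x
    unfolding p_def x_def by simp
  also have "\<dots> \<le> (r + 1) * 2 ^ p" by simp
  also have "\<dots> \<le> 2 ^ r * 2 ^ p" using less_exp[of r] by (intro mult_le_mono1) (simp add: Suc_le_eq)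
  also have "\<dots> = 2 ^ (r + p)" by (simp add: power_add)
  finally have "real (card (nbhd E ` V)) \<le> 2 ^ (r + p)"
    by (metis less_imp_le of_nat_le_iff of_nat_numeral of_nat_power)
  also have "\<dots> = 2 powr (real r + real p)" by (simp add: powr_realpow flip: of_nat_add)
  also have "\<dots> \<le> 2 powr (128 * (x + real r) * ln x)"
  proof (intro powr_mono)
    have "ln 2 \<le> ln x" using x by simp
    then have "1 \<le> 128 * ln x" using ln_2_ge_half by linarith
    then have "real r \<le> 128 * real r * ln x" using mult_left_mono[of 1 "128 * ln x" "real r"] by simp
    then show "real r + real p \<le> 128 * (x + real r) * ln x"
      using packing_exponent_le[OF x k] unfolding p_def by (simp add: algebra_simps)
  qed simp
  finally show ?thesis unfolding x_def .
qed

theorem theorem1p6: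
  shows "\<exists>C::real. C > 0 \<and>
    (\<forall>(r::nat) (\<epsilon>::real) (V::nat set) (E::nat \<Rightarrow> nat \<Rightarrow> bool).
      r \<ge> 3 \<and> 0 < \<epsilon> \<and> \<epsilon> \<le> 1/2 \<and> graph V E \<and> Kr_free V E r \<and>
      (\<forall>u\<in>V. \<forall>v\<in>V. u \<noteq> v \<and> \<not> E u v \<longrightarrow>
         real (num_cliques V E (nbhd E u \<inter> nbhd E v) (r - 2)) \<ge> \<epsilon> * real (card V) ^ (r - 2))
      \<longrightarrow> (\<exists>(W::nat set) (EF::nat \<Rightarrow> nat \<Rightarrow> bool).
             maximal_Kr_free W EF r \<and> blowup_of V E W EF \<and>
             real (card W) \<le> 2 powr (C * (1/\<epsilon> + real r) * ln (1/\<epsilon>))))"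
proof (intro exI[of _ 128] conjI allI impI)
  fix r :: nat and \<epsilon> :: real and V :: "nat set" and E :: "nat \<Rightarrow> nat \<Rightarrow> bool"
  assume "r \<ge> 3 \<and> 0 < \<epsilon> \<and> \<epsilon> \<le> 1/2 \<and> graph V E \<and> Kr_free V E r \<and>
      (\<forall>u\<in>V. \<forall>v\<in>V. u \<noteq> v \<and> \<not> E u v \<longrightarrow>
         real (num_cliques V E (nbhd E u \<inter> nbhd E v) (r - 2)) \<ge> \<epsilon> * real (card V) ^ (r - 2))"
  then have r: "r \<ge> 3" and \<epsilon>: "0 < \<epsilon>" "\<epsilon> \<le> 1/2" and g: "graph V E" and free: "Kr_free V E r"
    and dense: "dense_common_cliques V E r \<epsilon>"
    unfolding dense_common_cliques_def by blast+
  have "maximal_Kr_free (twin_reps V E) (induced E (twin_reps V E)) r"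
    using maximal_Kr_free_twin_reps[OF g free _ common_cliques_nonempty[OF g dense \<epsilon>(1)]] r by simp
  moreover have "blowup_of V E (twin_reps V E) (induced E (twin_reps V E))"
    using blowup_of_twin_reps[OF g] .
  moreover have "real (card (twin_reps V E)) \<le> 2 powr (128 * (1/\<epsilon> + real r) * ln (1/\<epsilon>))"
    using card_twin_reps_le[OF graph_finite[OF g], of E] card_nbhds_le_powr[OF g free r dense \<epsilon>]
    by linarith
  ultimately show "\<exists>(W::nat set) EF. maximal_Kr_free W EF r \<and> blowup_of V E W EF \<and>
      real (card W) \<le> 2 powr (128 * (1/\<epsilon> + real r) * ln (1/\<epsilon>))"
    by blast
qed simp

end
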